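(* Let $n$ be a non-negative integer. Then \[ \sum_{k=0}^{n}(-1)^k\binom{n}{k}2^{-2k}\binom{2k}{k}H_k^{(2)}=\binom{2n}{n}2^{-2n}H_n^{(2)}-\sum_{k=0}^{n-1}\frac{H_n-H_k}{n-k}\binom{2k}{k}2^{-2k}, \] and, more generally, for all complex numbers $u,v$ with $\Re u>-1$ and $\Re v>-1$, \[ \begin{aligned} &\sum_{k=0}^{n}(-1)^k\binom{n}{k}2^{-2k}\binom{2k+v}{(2k+v)/2}\binom{(2k+u+v)/2}{u/2}^{-1}H_k^{(2)}\\ &\quad=\binom{v}{v/2}\binom{u}{u/2}^{-1}\binom{2n+u}{(2n+u)/2}\binom{(2n+u+v)/2}{v/2}^{-1}2^{-2n}H_n^{(2)}\\ &\qquad-\binom{v}{v/2}\binom{u}{u/2}^{-1}\sum_{k=0}^{n-1}\frac{H_n-H_k}{n-k}\binom{2k+u}{(2k+u)/2}2^{-2k}\binom{(2k+u+v)/2}{v/2}^{-1}. \end{aligned} \]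
   Context: For integers $m\ge0$, $H_m=\sum_{j=1}^m 1/j$ and $H_m^{(2)}=\sum_{j=1}^m 1/j^2$. Binomial coefficients with complex entries: $\binom{x}{y}=\frac{\Gamma(x+1)}{\Gamma(y+1)\Gamma(x-y+1)}$. *)

theory Defs
  imports "HOL-Analysis.Analysis"
begin

definition harm1 :: "nat \<Rightarrow> real" where
  "harm1 m = (\<Sum>j=1..m. 1 / real j)"

definition harm2 :: "nat \<Rightarrow> real" where
  "harm2 m = (\<Sum>j=1..m. 1 / (real j)^2)"

definition cbinom :: "complex \<Rightarrow> complex \<Rightarrow> complex" where
  "cbinom x y = Gamma (x + 1) / (Gamma (y + 1) * Gamma (x - y + 1))"

end

theory Submission
  imports Defs
begin

text \<open>
  Up to a constant factor, the weight 4^-k C(2k+v, k+v/2) / C(k+(u+v)/2, u/2) equals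
  (a)_k / (g)_k with a = (v+1)/2 and g = (u+v)/2 + 1 (duplication formula for the Pochhammer
  symbol), and Chu--Vandermonde expands (a)_k / (g)_k as the alternating binomial transform of
  (g-a)_m / (g)_m, which is the same weight with u and v exchanged. After swapping the two sums
  only the coefficients sum_k (-1)^k C(n,k) C(k,m) H2_k remain; they are finite differences of H2,
  which telescope to (-1)^n H2_n for m = n and to (-1)^(m+1) (H_n - H_m) / (n - m) for m < n.
  The first identity is the case u = v = 0.
\<close>

lemma harm1_Suc: "harm1 (Suc m) = harm1 m + 1 / real (Suc m)"
  unfolding harm1_def by simp

lemma harm2_Suc: "harm2 (Suc m) = harm2 m + 1 / (real (Suc m))^2"
  unfolding harm2_def by simp

lemma sum_alternating_binomial_Suc:
  fixes f :: "nat \<Rightarrow> 'a::comm_ring_1"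
  shows "(\<Sum>i\<le>Suc N. (-1)^i * of_nat (Suc N choose i) * f i)
       = (\<Sum>i\<le>N. (-1)^i * of_nat (N choose i) * (f i - f (Suc i)))"
proof -
  have "(\<Sum>i\<le>Suc N. (-1)^i * of_nat (Suc N choose i) * f i)
      = (f 0 + (\<Sum>i\<le>N. (-1)^Suc i * of_nat (N choose Suc i) * f (Suc i)))
        + (\<Sum>i\<le>N. (-1)^Suc i * of_nat (N choose i) * f (Suc i))"
    by (subst sum.atMost_Suc_shift) (simp add: algebra_simps flip: sum.distrib)
  also have "f 0 + (\<Sum>i\<le>N. (-1)^Suc i * of_nat (N choose Suc i) * f (Suc i))
           = (\<Sum>i\<le>Suc N. (-1)^i * of_nat (N choose i) * f i)"
    by (subst sum.atMost_Suc_shift) simp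
  also have "\<dots> = (\<Sum>i\<le>N. (-1)^i * of_nat (N choose i) * f i)"
    by (simp add: binomial_eq_0)
  finally show ?thesis
    by (simp add: right_diff_distrib sum_subtractf sum_negf)
qed

lemma sum_alternating_binomial_harm2:
  "(\<Sum>i\<le>Suc K. (-1)^i * real (Suc K choose i) * harm2 (m + i))
     = -(harm1 (m + K + 1) - harm1 m) * fact m * fact K / fact (m + K + 1)"
proof (induction K arbitrary: m)
  case 0
  have "fact m > (0::real)" by simp
  then show ?case by (simp add: harm2_Suc harm1_Suc divide_simps power2_eq_square)
next
  case (Suc K)
  have "(\<Sum>i\<le>Suc (Suc K). (-1)^i * real (Suc (Suc K) choose i) * harm2 (m + i))
      = (\<Sum>i\<le>Suc K. (-1)^i * real (Suc K choose i) * harm2 (m + i))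
        - (\<Sum>i\<le>Suc K. (-1)^i * real (Suc K choose i) * harm2 (Suc m + i))"
    by (subst sum_alternating_binomial_Suc) (simp add: algebra_simps sum_subtractf)
  also have "\<dots> = -(harm1 (m + K + 1) - harm1 m) * fact m * fact K / fact (m + K + 1)
        - (-(harm1 (Suc m + K + 1) - harm1 (Suc m)) * fact (Suc m) * fact K / fact (Suc m + K + 1))"
    by (simp only: Suc.IH)
  also have "\<dots> = -(harm1 (m + Suc K + 1) - harm1 m) * fact m * fact (Suc K) / fact (m + Suc K + 1)"
    by (simp add: harm1_Suc fact_Suc divide_simps) (simp add: algebra_simps)
  finally show ?case .
qed

lemma sum_alternating_binomial_choose:
  fixes f :: "nat \<Rightarrow> 'a::comm_ring_1"
  assumes "m \<le> n"
  shows "(\<Sum>k\<le>n. (-1)^k * of_nat (n choose k) * of_nat (k choose m) * f k)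
       = (-1)^m * of_nat (n choose m) * (\<Sum>i\<le>n - m. (-1)^i * of_nat ((n - m) choose i) * f (m + i))"
proof -
  have "(\<Sum>k\<le>n. (-1)^k * of_nat (n choose k) * of_nat (k choose m) * f k)
      = (\<Sum>k=m..n. (-1)^k * of_nat (n choose k) * of_nat (k choose m) * f k)"
    by (rule sum.mono_neutral_right) (auto simp: binomial_eq_0)
  also have "\<dots> = (\<Sum>i\<le>n - m. (-1)^(m + i) * of_nat (n choose (m + i)) * of_nat ((m + i) choose m) * f (m + i))"
    using assms by (intro sum.reindex_bij_witness[of _ "\<lambda>i. m + i" "\<lambda>k. k - m"]) auto
  also have "\<dots> = (\<Sum>i\<le>n - m. (-1)^m * of_nat (n choose m) * ((-1)^i * of_nat ((n - m) choose i) * f (m + i)))"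
  proof (rule sum.cong [OF refl])
    fix i assume "i \<in> {..n - m}"
    then have "(n choose (m + i)) * ((m + i) choose m) = (n choose m) * ((n - m) choose i)"
      using assms choose_mult[of m "m + i" n] by simp
    then have "of_nat (n choose (m + i)) * of_nat ((m + i) choose m) = (of_nat (n choose m) * of_nat ((n - m) choose i) :: 'a)"
      by (metis of_nat_mult)
    then show "(-1)^(m + i) * of_nat (n choose (m + i)) * of_nat ((m + i) choose m) * f (m + i)
        = (-1)^m * of_nat (n choose m) * ((-1)^i * of_nat ((n - m) choose i) * f (m + i))"
      by (simp add: power_add algebra_simps)
  qed
  finally show ?thesis
    by (simp add: sum_distrib_left)
qed

lemma sum_alternating_binomial_choose_harm2:
  assumes "m < n"
  shows "(\<Sum>k\<le>n. (-1)^k * real (n choose k) * real (k choose m) * harm2 k)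
       = (-1)^m * (-(harm1 n - harm1 m) / real (n - m))"
proof -
  obtain K where K: "n - m = Suc K"
    using assms by (metis Suc_diff_Suc)
  then have n: "n = m + K + 1"
    using assms by simp
  have "fact m * fact (n - m) * (n choose m) = fact n"
    using assms by (simp add: binomial_fact_lemma)
  then have "real (fact m * fact (Suc K) * (n choose m)) = fact n"
    unfolding K by (metis of_nat_fact)
  then have fact_n: "fact n = real (n choose m) * fact m * fact K * real (Suc K)"
    by (simp add: fact_Suc algebra_simps)
  have "(\<Sum>k\<le>n. (-1)^k * real (n choose k) * real (k choose m) * harm2 k)
      = (-1)^m * real (n choose m) * (\<Sum>i\<le>Suc K. (-1)^i * real (Suc K choose i) * harm2 (m + i))"
    using sum_alternating_binomial_choose[of m n harm2] assms K by simp
  also have "\<dots> = (-1)^m * real (n choose m) * (-(harm1 n - harm1 m) * fact m * fact K / fact n)"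
    by (simp only: sum_alternating_binomial_harm2 n)
  also have "\<dots> = (-1)^m * (-(harm1 n - harm1 m) / real (n - m))"
    using assms by (simp add: fact_n K)
  finally show ?thesis .
qed

lemma sum_binomial_transform_harm2:
  fixes s :: "nat \<Rightarrow> 'a::real_field"
  shows "(\<Sum>k\<le>n. (-1)^k * of_nat (n choose k) * (\<Sum>m\<le>k. (-1)^m * of_nat (k choose m) * s m) * of_real (harm2 k))
       = s n * of_real (harm2 n) - (\<Sum>m<n. of_real ((harm1 n - harm1 m) / real (n - m)) * s m)"
proof -
  define c where "c m = (-1)^m * (\<Sum>k\<le>n. (-1)^k * real (n choose k) * real (k choose m) * harm2 k)" for m
  have inner: "(\<Sum>m\<le>k. (-1)^m * of_nat (k choose m) * s m) = (\<Sum>m\<le>n. (-1)^m * of_nat (k choose m) * s m)"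
    if "k \<le> n" for k
    using that by (intro sum.mono_neutral_left) (auto simp: binomial_eq_0)
  have "(\<Sum>k\<le>n. (-1)^k * of_nat (n choose k) * (\<Sum>m\<le>k. (-1)^m * of_nat (k choose m) * s m) * of_real (harm2 k))
      = (\<Sum>k\<le>n. \<Sum>m\<le>n. (-1)^k * of_nat (n choose k) * ((-1)^m * of_nat (k choose m) * s m) * of_real (harm2 k))"
    by (simp add: inner sum_distrib_left sum_distrib_right)
  also have "\<dots> = (\<Sum>m\<le>n. s m * of_real (c m))"
    by (subst sum.swap) (simp add: c_def sum_distrib_left sum_distrib_right algebra_simps)
  also have "\<dots> = s n * of_real (c n) + (\<Sum>m<n. s m * of_real (c m))"
    by (simp add: lessThan_Suc_atMost [symmetric])
  also have "\<dots> = s n * of_real (harm2 n) - (\<Sum>m<n. of_real ((harm1 n - harm1 m) / real (n - m)) * s m)"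
  proof -
    have "c n = harm2 n"
      using sum_alternating_binomial_choose [of n n harm2] by (simp add: c_def flip: power_add)
    moreover have "c m = -((harm1 n - harm1 m) / real (n - m))" if "m < n" for m
      using that by (simp add: c_def sum_alternating_binomial_choose_harm2 minus_divide_left flip: power_add)
    ultimately show ?thesis
      by (simp add: sum_negf [symmetric] mult.commute)
  qed
  finally show ?thesis .
qed

lemma Vandermonde_pochhammer_alternating:
  fixes \<alpha> \<gamma> :: "'a::field_char_0"
  assumes "\<gamma> \<notin> \<int>\<^sub>\<le>\<^sub>0"
  shows "pochhammer \<alpha> k / pochhammer \<gamma> k
       = (\<Sum>m\<le>k. (-1)^m * of_nat (k choose m) * (pochhammer (\<gamma> - \<alpha>) m / pochhammer \<gamma> m))"
proof -
  have no_pole: "\<forall>i\<in>{0..<k}. \<gamma> \<noteq> - of_nat i"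
    using assms by auto
  have neg_k: "pochhammer (- of_nat k) m = (-1)^m * fact m * (of_nat (k choose m) :: 'a)" for m
    by (simp add: binomial_gbinomial gbinomial_pochhammer)
  show ?thesis
    using Vandermonde_pochhammer [OF no_pole, of "\<gamma> - \<alpha>"]
    by (simp add: atLeast0AtMost neg_k field_simps flip: power_add)
qed

lemma Gamma_double_shift:
  fixes w :: "'a::Gamma"
  assumes "w + 1 \<notin> \<int>\<^sub>\<le>\<^sub>0" "w / 2 + 1 \<notin> \<int>\<^sub>\<le>\<^sub>0"
  shows "Gamma (w + 1 + 2 * of_nat k) * Gamma (w / 2 + 1)
       = 4^k * pochhammer ((w + 1) / 2) k * Gamma (w + 1) * Gamma (w / 2 + 1 + of_nat k)"
proof -
  have "pochhammer (w + 1) (2 * k) = 4^k * pochhammer ((w + 1) / 2) k * pochhammer (w / 2 + 1) k"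
    using pochhammer_double [of "(w + 1) / 2" k] by (simp add: power_mult add_divide_distrib add.commute)
  moreover have "pochhammer (w + 1) (2 * k) = Gamma (w + 1 + 2 * of_nat k) / Gamma (w + 1)"
    using pochhammer_Gamma [OF assms(1), of "2 * k"] by simp
  moreover have "pochhammer (w / 2 + 1) k = Gamma (w / 2 + 1 + of_nat k) / Gamma (w / 2 + 1)"
    using pochhammer_Gamma [OF assms(2)] .
  ultimately show ?thesis
    using Gamma_nonzero [OF assms(1)] Gamma_nonzero [OF assms(2)] by (simp add: field_simps)
qed

lemma Re_pos_notin_nonpos_Ints: "Re z > 0 \<Longrightarrow> z \<notin> \<int>\<^sub>\<le>\<^sub>0"
  by (auto elim!: nonpos_Ints_cases)

lemma cbinom_half: "cbinom x (x / 2) = Gamma (x + 1) / Gamma (x / 2 + 1)^2"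
  by (simp add: cbinom_def power2_eq_square)

definition central_term :: "complex \<Rightarrow> complex \<Rightarrow> nat \<Rightarrow> complex" where
  "central_term u v k = 2 powi (-(2 * int k)) * cbinom (2 * of_nat k + v) ((2 * of_nat k + v) / 2)
                          * inverse (cbinom ((2 * of_nat k + u + v) / 2) (u / 2))"

lemma central_term_pochhammer:
  assumes u: "Re u > -1" and v: "Re v > -1"
  shows "central_term u v k = Gamma (u / 2 + 1) * Gamma (v + 1) / (Gamma (v / 2 + 1) * Gamma ((u + v) / 2 + 1))
                              * (pochhammer ((v + 1) / 2) k / pochhammer ((u + v) / 2 + 1) k)"
proof -
  define g where "g = (u + v) / 2 + 1"
  define a where "a = v / 2 + 1 + of_nat k"
  have nonpole: "v + 1 \<notin> \<int>\<^sub>\<le>\<^sub>0" "v / 2 + 1 \<notin> \<int>\<^sub>\<le>\<^sub>0" "u / 2 + 1 \<notin> \<int>\<^sub>\<le>\<^sub>0"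
      "a \<notin> \<int>\<^sub>\<le>\<^sub>0" "g \<notin> \<int>\<^sub>\<le>\<^sub>0"
    using u v by (auto intro!: Re_pos_notin_nonpos_Ints simp: g_def a_def field_simps)
  have top: "cbinom (2 * of_nat k + v) ((2 * of_nat k + v) / 2) = Gamma (v + 1 + 2 * of_nat k) / Gamma a^2"
    using cbinom_half [of "2 * of_nat k + v"] by (simp add: a_def add_divide_distrib add_ac)
  have bottom: "cbinom ((2 * of_nat k + u + v) / 2) (u / 2) = Gamma g * pochhammer g k / (Gamma (u / 2 + 1) * Gamma a)"
    using pochhammer_Gamma [OF nonpole(5), of k] Gamma_nonzero [OF nonpole(5)]
    by (simp add: cbinom_def g_def a_def add_divide_distrib diff_divide_distrib add_ac)
  have scale: "(2::complex) powi (-(2 * int k)) = 1 / 4^k"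
    using power_int_of_nat [of "2::complex" "2 * k"] by (simp add: power_int_minus power_mult divide_inverse)
  have "pochhammer g k \<noteq> 0"
    using nonpole(5) by (auto simp: pochhammer_eq_0_iff)
  then show ?thesis
    using Gamma_double_shift [OF nonpole(1,2), of k, folded a_def]
      Gamma_nonzero [OF nonpole(2)] Gamma_nonzero [OF nonpole(3)] Gamma_nonzero [OF nonpole(4)]
      Gamma_nonzero [OF nonpole(5)]
    unfolding central_term_def top bottom scale g_def [symmetric]
    by (simp add: field_simps power2_eq_square)
qed

lemma sum_central_term_harm2:
  assumes u: "Re u > -1" and v: "Re v > -1"
  shows "(\<Sum>k\<le>n. (-1)^k * of_nat (n choose k) * central_term u v k * of_real (harm2 k))
       = cbinom v (v / 2) * inverse (cbinom u (u / 2))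
         * (central_term v u n * of_real (harm2 n)
            - (\<Sum>k<n. of_real ((harm1 n - harm1 k) / real (n - k)) * central_term v u k))"
proof -
  define \<gamma> where "\<gamma> = (u + v) / 2 + 1"
  define s where "s m = pochhammer ((u + 1) / 2) m / pochhammer \<gamma> m" for m
  define C where "C x y = Gamma (x / 2 + 1) * Gamma (y + 1) / (Gamma (y / 2 + 1) * Gamma \<gamma>)" for x y
  have \<gamma>_nonpole: "\<gamma> \<notin> \<int>\<^sub>\<le>\<^sub>0"
    using u v by (intro Re_pos_notin_nonpos_Ints) (simp add: \<gamma>_def field_simps)
  have \<gamma>_minus: "\<gamma> - (v + 1) / 2 = (u + 1) / 2"
    by (simp add: \<gamma>_def field_simps)
  have term_uv: "central_term u v k = C u v * (\<Sum>m\<le>k. (-1)^m * of_nat (k choose m) * s m)" for k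
  proof -
    have "central_term u v k = C u v * (pochhammer ((v + 1) / 2) k / pochhammer \<gamma> k)"
      using central_term_pochhammer [OF u v, of k] by (simp add: C_def \<gamma>_def)
    then show ?thesis
      by (simp only: Vandermonde_pochhammer_alternating [OF \<gamma>_nonpole, of "(v + 1) / 2" k] \<gamma>_minus s_def)
  qed
  have term_vu: "central_term v u k = C v u * s k" for k
    using central_term_pochhammer [OF v u, of k] by (simp add: C_def s_def \<gamma>_def add.commute)
  have C_swap: "C u v = cbinom v (v / 2) * inverse (cbinom u (u / 2)) * C v u"
  proof -
    have "u + 1 \<notin> \<int>\<^sub>\<le>\<^sub>0" "u / 2 + 1 \<notin> \<int>\<^sub>\<le>\<^sub>0" "v / 2 + 1 \<notin> \<int>\<^sub>\<le>\<^sub>0"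
      using u v by (auto intro!: Re_pos_notin_nonpos_Ints simp: field_simps)
    then show ?thesis
      by (simp add: C_def cbinom_half Gamma_nonzero field_simps power2_eq_square)
  qed
  have "(\<Sum>k\<le>n. (-1)^k * of_nat (n choose k) * central_term u v k * of_real (harm2 k))
      = (\<Sum>k\<le>n. C u v * ((-1)^k * of_nat (n choose k) * (\<Sum>m\<le>k. (-1)^m * of_nat (k choose m) * s m) * of_real (harm2 k)))"
    by (rule sum.cong) (simp_all only: term_uv mult_ac)
  also have "\<dots> = C u v * (\<Sum>k\<le>n. (-1)^k * of_nat (n choose k) * (\<Sum>m\<le>k. (-1)^m * of_nat (k choose m) * s m) * of_real (harm2 k))"
    by (rule sum_distrib_left [symmetric])
  also have "\<dots> = C u v * (s n * of_real (harm2 n) - (\<Sum>m<n. of_real ((harm1 n - harm1 m) / real (n - m)) * s m))"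
    by (simp only: sum_binomial_transform_harm2)
  also have "\<dots> = cbinom v (v / 2) * inverse (cbinom u (u / 2))
         * (C v u * s n * of_real (harm2 n) - (\<Sum>m<n. of_real ((harm1 n - harm1 m) / real (n - m)) * (C v u * s m)))"
  proof -
    have "(\<Sum>m<n. of_real ((harm1 n - harm1 m) / real (n - m)) * (C v u * s m))
        = C v u * (\<Sum>m<n. of_real ((harm1 n - harm1 m) / real (n - m)) * s m)"
      by (simp add: sum_distrib_left mult_ac)
    then show ?thesis
      by (simp only: C_swap) (simp add: algebra_simps)
  qed
  finally show ?thesis
    by (simp only: term_vu)
qed

lemma cbinom_of_nat:
  assumes "j \<le> m"
  shows "cbinom (of_nat m) (of_nat j) = of_nat (m choose j)"
proof -
  have "Gamma (of_nat i + 1) = (fact i :: complex)" for i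
    using Gamma_fact [of i] by (simp add: add.commute)
  then show ?thesis
    using assms by (simp add: cbinom_def binomial_fact flip: of_nat_diff)
qed

lemma central_term_0_0: "central_term 0 0 k = of_nat ((2 * k) choose k) * 2 powi (-(2 * int k))"
  using cbinom_of_nat [of k "2 * k"] cbinom_of_nat [of 0 k] by (simp add: central_term_def)

lemma sum_central_binomial_harm2:
  "(\<Sum>k=0..n. (-1)^k * real (n choose k) * 2 powi (-(2 * int k)) * real ((2*k) choose k) * harm2 k)
     = real ((2*n) choose n) * 2 powi (-(2 * int n)) * harm2 n
       - (\<Sum>k<n. (harm1 n - harm1 k) / real (n - k) * real ((2*k) choose k) * 2 powi (-(2 * int k)))"
proof -
  have "cbinom 0 (0 / 2) = 1"
    by (simp add: cbinom_def)
  then have "complex_of_real (\<Sum>k=0..n. (-1)^k * real (n choose k) * 2 powi (-(2 * int k)) * real ((2*k) choose k) * harm2 k)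
      = complex_of_real (real ((2*n) choose n) * 2 powi (-(2 * int n)) * harm2 n
          - (\<Sum>k<n. (harm1 n - harm1 k) / real (n - k) * real ((2*k) choose k) * 2 powi (-(2 * int k))))"
    using sum_central_term_harm2 [of 0 0 n] by (simp add: central_term_0_0 atLeast0AtMost mult_ac)
  then show ?thesis
    by (simp only: of_real_eq_iff)
qed

theorem theorem36:
  fixes n :: nat
  shows "((\<Sum>k=0..n. (-1)^k * real (n choose k) * 2 powi (-(2 * int k)) * real ((2*k) choose k) * harm2 k)
          = real ((2*n) choose n) * 2 powi (-(2 * int n)) * harm2 n
            - (\<Sum>k<n. (harm1 n - harm1 k) / real (n - k) * real ((2*k) choose k) * 2 powi (-(2 * int k))))
       \<and> (\<forall>u v :: complex. Re u > -1 \<longrightarrow> Re v > -1 \<longrightarrow>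
          (\<Sum>k=0..n. (-1)^k * of_nat (n choose k) * 2 powi (-(2 * int k))
              * cbinom (2 * of_nat k + v) ((2 * of_nat k + v) / 2)
              * inverse (cbinom ((2 * of_nat k + u + v) / 2) (u / 2))
              * of_real (harm2 k))
          = cbinom v (v / 2) * inverse (cbinom u (u / 2))
              * cbinom (2 * of_nat n + u) ((2 * of_nat n + u) / 2)
              * inverse (cbinom ((2 * of_nat n + u + v) / 2) (v / 2))
              * 2 powi (-(2 * int n)) * of_real (harm2 n)
            - cbinom v (v / 2) * inverse (cbinom u (u / 2))
              * (\<Sum>k<n. of_real ((harm1 n - harm1 k) / real (n - k))
                  * cbinom (2 * of_nat k + u) ((2 * of_nat k + u) / 2)
                  * 2 powi (-(2 * int k))
                  * inverse (cbinom ((2 * of_nat k + u + v) / 2) (v / 2))))"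
proof (intro conjI allI impI sum_central_binomial_harm2, goal_cases)
  case (1 u v)
  have "2 * of_nat k + v + u = 2 * of_nat k + u + v" for k
    by (simp add: add_ac)
  then have swap: "central_term v u k = cbinom (2 * of_nat k + u) ((2 * of_nat k + u) / 2) * 2 powi (-(2 * int k))
                * inverse (cbinom ((2 * of_nat k + u + v) / 2) (v / 2))" for k
    by (simp only: central_term_def mult_ac)
  show ?case (is "?lhs = ?rhs")
  proof -
    have "?lhs = (\<Sum>k\<le>n. (-1)^k * of_nat (n choose k) * central_term u v k * of_real (harm2 k))"
      by (simp only: atLeast0AtMost central_term_def mult.assoc)
    also have "\<dots> = cbinom v (v / 2) * inverse (cbinom u (u / 2))
        * (central_term v u n * of_real (harm2 n)
           - (\<Sum>k<n. of_real ((harm1 n - harm1 k) / real (n - k)) * central_term v u k))"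
      by (rule sum_central_term_harm2 [OF 1])
    also have "\<dots> = ?rhs"
      by (simp only: swap right_diff_distrib mult_ac)
    finally show ?thesis .
  qed
qed

end
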